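(* Let $M$ be a PVM on a finite-dimensional Hilbert space consisting of rank-one projections ($w(M)=1$) which commutes with a density operator $\sigma$. Then for every density operator $\rho$ and every $a\in\mathbb{R}$, $$\mathrm{P}^M_\rho\{\log\mathrm{P}^M_\sigma(\omega)\ge a\}\le\exp\Bigl(-\sup_{t\ge0}\bigl(at-\log\mathrm{Tr}\rho\sigma^t\bigr)\Bigr).$$
   Context: $\mathrm{P}^M_\rho(\omega)=\mathrm{Tr}\rho M_\omega$ is the outcome distribution of the PVM $M=\{M_\omega\}$ in state $\rho$; $M$ commutes with $\sigma$ if $\sigma M_\omega=M_\omega\sigma$ for all $\omega$; $w(M)=\sup_\omega\dim(\mathrm{range}\,M_\omega)$. *)

theory Defs
  imports "HOL-Analysis.Analysis"
begin

definition cinner :: "complex^'n \<Rightarrow> complex^'n \<Rightarrow> complex" where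
  "cinner x y = (\<Sum>i\<in>UNIV. cnj (x$i) * y$i)"

definition cadjoint :: "complex^'n^'n \<Rightarrow> complex^'n^'n" where
  "cadjoint A = (\<chi> i j. cnj (A$j$i))"

definition hermitian :: "complex^'n^'n \<Rightarrow> bool" where
  "hermitian A \<longleftrightarrow> cadjoint A = A"

definition positive_op :: "complex^'n^'n \<Rightarrow> bool" where
  "positive_op A \<longleftrightarrow> hermitian A \<and> (\<forall>x. 0 \<le> Re (cinner x (A *v x)))"

definition density_op :: "complex^'n^'n \<Rightarrow> bool" where
  "density_op A \<longleftrightarrow> positive_op A \<and> trace A = 1"

definition orth_proj :: "complex^'n^'n \<Rightarrow> bool" where
  "orth_proj P \<longleftrightarrow> hermitian P \<and> P ** P = P"

definition is_PVM :: "'w set \<Rightarrow> ('w \<Rightarrow> complex^'n^'n) \<Rightarrow> bool" where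
  "is_PVM \<Omega> M \<longleftrightarrow> finite \<Omega> \<and> (\<forall>\<omega>\<in>\<Omega>. orth_proj (M \<omega>)) \<and> (\<Sum>\<omega>\<in>\<Omega>. M \<omega>) = mat 1"

definition outcome_prob :: "complex^'n^'n \<Rightarrow> ('w \<Rightarrow> complex^'n^'n) \<Rightarrow> 'w \<Rightarrow> real" where
  "outcome_prob \<rho> M \<omega> = Re (trace (\<rho> ** M \<omega>))"

definition pvm_commutes :: "'w set \<Rightarrow> ('w \<Rightarrow> complex^'n^'n) \<Rightarrow> complex^'n^'n \<Rightarrow> bool" where
  "pvm_commutes \<Omega> M \<sigma> \<longleftrightarrow> (\<forall>\<omega>\<in>\<Omega>. \<sigma> ** M \<omega> = M \<omega> ** \<sigma>)"

definition pvm_width :: "'w set \<Rightarrow> ('w \<Rightarrow> complex^'n^'n) \<Rightarrow> nat" where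
  "pvm_width \<Omega> M = Sup ((\<lambda>\<omega>. vec.dim (range ((*v) (M \<omega>)))) ` \<Omega>)"

text \<open>Matrix power sigma^t of a positive operator via functional calculus:
  sigma^t acts as lambda powr t on every lambda-eigenvector (with 0 powr t = 0).\<close>
definition mpow :: "complex^'n^'n \<Rightarrow> real \<Rightarrow> complex^'n^'n" where
  "mpow \<sigma> t = (THE X. \<forall>v c. \<sigma> *v v = c *s v \<longrightarrow>
                      X *v v = complex_of_real (Re c powr t) *s v)"

definition log_ext :: "real \<Rightarrow> ereal" where
  "log_ext x = (if x > 0 then ereal (ln x) else -\<infinity>)"

definition exp_ext :: "ereal \<Rightarrow> ereal" where
  "exp_ext x = (case x of ereal r \<Rightarrow> ereal (exp r) | PInfty \<Rightarrow> \<infinity> | MInfty \<Rightarrow> 0)"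

end

theory Submission
  imports Defs
begin

(* Since sigma commutes with the projections M w and each has rank at most one, M w projects
   onto an eigenvector of sigma with eigenvalue Tr sigma M w = P_sigma(w).  Hence
   sigma^t = (SUM w. P_sigma(w)^t M w) and Tr rho sigma^t = (SUM w. P_sigma(w)^t P_rho(w)),
   and the claim is Markov's inequality for the variable P_sigma^t under P_rho,
   optimised over t >= 0. *)

lemma sum_matrix_vector_mult:
  "(\<Sum>w\<in>S. A w) *v x = (\<Sum>w\<in>S. A w *v (x::'a::comm_ring_1^'n))"
  by (induction S rule: infinite_finite_induct) (auto simp: matrix_vector_mult_add_rdistrib)

lemma scaleR_matrix_vector_mult:
  "((c::real) *\<^sub>R A) *v x = c *\<^sub>R (A *v (x::'a::{real_algebra_1,comm_ring_1}^'n))"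
  by (simp add: vec_eq_iff matrix_vector_mult_def scaleR_sum_right)

lemma scaleR_eq_vector_smult_of_real:
  "(r::real) *\<^sub>R (x::'a::real_algebra_1^'n) = of_real r *s x"
  by (simp add: vec_eq_iff) (simp add: scaleR_conv_of_real)

lemma trace_mult_scaleR:
  "trace (A ** ((c::real) *\<^sub>R B))
     = of_real c * trace (A ** (B::'a::{real_algebra_1,comm_ring_1}^'n^'n))"
  by (simp add: trace_def matrix_matrix_mult_def sum_distrib_left)
    (simp add: scaleR_conv_of_real mult.left_commute)

lemma trace_mult_sum_scaleR:
  "trace (A ** (\<Sum>w\<in>S. (c w::real) *\<^sub>R B w))
     = (\<Sum>w\<in>S. of_real (c w) * trace (A ** (B w::'a::{real_algebra_1,comm_ring_1}^'n^'n)))"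
  by (induction S rule: infinite_finite_induct)
    (simp_all add: matrix_add_ldistrib trace_add trace_mult_scaleR trace_0[unfolded mat_0])

lemma trace_mult_orth_proj_nonneg:
  fixes \<rho> P :: "complex^'n^'n"
  assumes "positive_op \<rho>" and "orth_proj P"
  shows "0 \<le> Re (trace (\<rho> ** P))"
proof -
  have PP: "P ** P = P"
    using assms(2) unfolding orth_proj_def by simp
  have adjoint_entry: "P$i$j = cnj (P$j$i)" for i j
  proof -
    have "cadjoint P $ i $ j = P $ i $ j"
      using assms(2) unfolding orth_proj_def hermitian_def by simp
    then show ?thesis
      unfolding cadjoint_def by simp
  qed
  \<comment> \<open>adjoint_entry loops as a rewrite rule; this instance does not\<close>
  have adjoint_entry_mult: "P$i$j * z = cnj (P$j$i) * z" for i j z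
    by (simp only: adjoint_entry[of i j])
  define col where "col i = (\<chi> j. P$j$i)" for i
  have "trace (\<rho> ** P) = trace ((\<rho> ** P) ** P)"
    by (simp add: matrix_mul_assoc[symmetric] PP)
  also have "\<dots> = trace (P ** (\<rho> ** P))"
    by (rule trace_mul_sym)
  also have "\<dots> = (\<Sum>i\<in>UNIV. cinner (col i) (\<rho> *v col i))"
    unfolding trace_def cinner_def col_def matrix_matrix_mult_def matrix_vector_mult_def
    by (simp add: adjoint_entry_mult)
  finally have "Re (trace (\<rho> ** P)) = (\<Sum>i\<in>UNIV. Re (cinner (col i) (\<rho> *v col i)))"
    by simp
  also have "\<dots> \<ge> 0"
    using assms(1) unfolding positive_op_def by (simp add: sum_nonneg)
  finally show ?thesis .
qed

lemma subspace_dim_le_1_generator: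
  assumes "vec.subspace S" and "vec.dim S \<le> 1"
  obtains e where "e \<in> S" and "\<And>x. x \<in> S \<Longrightarrow> \<exists>k. x = k *s e"
proof -
  obtain B where B: "B \<subseteq> S" "vec.independent B" "S \<subseteq> vec.span B" "card B = vec.dim S"
    by (rule vec.basis_exists)
  have "finite B"
    using B(2) by (rule vec.finiteI_independent)
  then have single: "\<forall>b\<in>B. \<forall>b'\<in>B. b = b'"
    using card_le_Suc0_iff_eq[OF \<open>finite B\<close>] B(4) assms(2) by simp
  obtain e where "e \<in> S" and "B \<subseteq> {e}"
  proof (cases "B = {}")
    case True
    show ?thesis
      by (rule that[OF vec.subspace_0[OF assms(1)]]) (simp add: True)
  next
    case False
    then obtain b where "b \<in> B"
      by blast
    with single B(1) have "b \<in> S" and "B \<subseteq> {b}"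
      by auto
    then show ?thesis
      by (rule that)
  qed
  have "S \<subseteq> vec.span {e}"
    using B(3) vec.span_mono[OF \<open>B \<subseteq> {e}\<close>] by (rule subset_trans)
  show ?thesis
  proof (rule that[OF \<open>e \<in> S\<close>])
    fix x
    assume "x \<in> S"
    with \<open>S \<subseteq> vec.span {e}\<close> have "x \<in> range (\<lambda>k. k *s e)"
      by (simp add: subset_iff flip: vec.span_singleton)
    then show "\<exists>k. x = k *s e"
      by (simp add: image_iff)
  qed
qed

lemma idempotent_rank_le_1_generator:
  fixes P :: "'a::field^'n^'n"
  assumes "P ** P = P" and "vec.dim (range ((*v) P)) \<le> 1"
  obtains e where "P *v e = e" and "\<And>x. \<exists>k. P *v x = k *s e"
proof -
  have "vec.subspace (range ((*v) P))"
    by (rule vec.subspace_image[OF vec.subspace_UNIV])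
  then obtain e where e: "e \<in> range ((*v) P)"
    and gen: "\<And>y. y \<in> range ((*v) P) \<Longrightarrow> \<exists>k. y = k *s e"
    by (rule subspace_dim_le_1_generator[OF _ assms(2)]) blast+
  show ?thesis
  proof (rule that)
    from e obtain y where "e = P *v y"
      by blast
    then show "P *v e = e"
      by (simp only: matrix_vector_mul_assoc assms(1))
    show "\<exists>k. P *v x = k *s e" for x
      by (rule gen) (rule rangeI)
  qed
qed

lemma matrix_vector_mult_axis_component:
  "(A *v axis j (1::'a::comm_ring_1)) $ i = A$i$j"
  by (simp add: matrix_vector_mult_def axis_def if_distrib cong: if_cong)

lemma trace_idempotent_rank_le_1:
  fixes P :: "'a::field^'n^'n"
  assumes "P ** P = P" and "vec.dim (range ((*v) P)) \<le> 1" and "P \<noteq> 0"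
  shows "trace P = 1"
proof -
  obtain e where Pe: "P *v e = e" and "\<And>x. \<exists>k. P *v x = k *s e"
    using idempotent_rank_le_1_generator[OF assms(1,2)] by blast
  then obtain k where k: "\<And>x. P *v x = k x *s e"
    by metis
  have entries: "P$i$j = k (axis j 1) * e$i" for i j
    by (metis k matrix_vector_mult_axis_component vector_smult_component)
  have "e \<noteq> 0"
    using assms(3) k by (auto simp: matrix_eq)
  then obtain i where "e$i \<noteq> 0"
    by (auto simp: vec_eq_iff)
  have "e$i = (P *v e)$i"
    using Pe by simp
  also have "\<dots> = e$i * trace P"
    by (simp add: matrix_vector_mult_def trace_def entries sum_distrib_left mult_ac)
  finally show ?thesis
    using \<open>e$i \<noteq> 0\<close> by simp
qed

lemma trace_mult_eq_scalar_on_range: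
  fixes \<sigma> P :: "'a::comm_ring_1^'n^'n"
  assumes "\<And>x. \<sigma> *v (P *v x) = c *s (P *v x)"
  shows "trace (\<sigma> ** P) = c * trace P"
proof -
  have "(\<sigma> ** P)$i$j = c * P$i$j" for i j
    by (metis assms matrix_vector_mul_assoc matrix_vector_mult_axis_component vector_smult_component)
  then show ?thesis
    by (simp add: trace_def sum_distrib_left)
qed

lemma commuting_idempotent_rank_le_1_eigen:
  fixes \<sigma> P :: "'a::field^'n^'n"
  assumes "P ** P = P" and "vec.dim (range ((*v) P)) \<le> 1" and "\<sigma> ** P = P ** \<sigma>"
  shows "\<sigma> *v (P *v x) = trace (\<sigma> ** P) *s (P *v x)"
proof (cases "P = 0")
  case True
  then show ?thesis
    by simp
next
  case False
  obtain e where Pe: "P *v e = e" and gen: "\<And>x. \<exists>k. P *v x = k *s e"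
    using idempotent_rank_le_1_generator[OF assms(1,2)] by blast
  have "\<sigma> *v e = P *v (\<sigma> *v e)"
    by (metis Pe assms(3) matrix_vector_mul_assoc)
  then obtain c where "\<sigma> *v e = c *s e"
    using gen by metis
  then have eigen: "\<sigma> *v (P *v y) = c *s (P *v y)" for y
    using gen[of y] by (auto simp: vec.scale vector_smult_assoc mult.commute)
  then have "trace (\<sigma> ** P) = c"
    using trace_mult_eq_scalar_on_range[of \<sigma> P c] trace_idempotent_rank_le_1[OF assms(1,2) False]
    by simp
  with eigen show ?thesis
    by simp
qed

lemma spectral_sum_eigenvector:
  fixes \<sigma> :: "complex^'n^'n" and M :: "'w \<Rightarrow> complex^'n^'n" and f :: "complex \<Rightarrow> real"
  assumes sum: "(\<Sum>w\<in>\<Omega>. M w) = mat 1"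
    and comm: "\<And>w. w \<in> \<Omega> \<Longrightarrow> \<sigma> ** M w = M w ** \<sigma>"
    and eigen: "\<And>w x. w \<in> \<Omega> \<Longrightarrow> \<sigma> *v (M w *v x) = c w *s (M w *v x)"
    and v: "\<sigma> *v v = \<mu> *s v"
  shows "(\<Sum>w\<in>\<Omega>. f (c w) *\<^sub>R M w) *v v = of_real (f \<mu>) *s v"
proof -
  have component: "f (c w) *\<^sub>R (M w *v v) = of_real (f \<mu>) *s (M w *v v)" if "w \<in> \<Omega>" for w
  proof -
    have "c w *s (M w *v v) = M w *v (\<sigma> *v v)"
      using eigen[OF that] comm[OF that] by (simp add: matrix_vector_mul_assoc)
    also have "\<dots> = \<mu> *s (M w *v v)"
      by (simp add: v vec.scale)
    finally have "c w = \<mu> \<or> M w *v v = 0"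
      by simp
    then show ?thesis
      by (auto simp: scaleR_eq_vector_smult_of_real)
  qed
  have "(\<Sum>w\<in>\<Omega>. f (c w) *\<^sub>R M w) *v v = (\<Sum>w\<in>\<Omega>. f (c w) *\<^sub>R (M w *v v))"
    by (simp add: sum_matrix_vector_mult scaleR_matrix_vector_mult)
  also have "\<dots> = (\<Sum>w\<in>\<Omega>. of_real (f \<mu>) *s (M w *v v))"
    using component by (rule sum.cong[OF refl])
  also have "\<dots> = of_real (f \<mu>) *s v"
    by (simp add: vec.scale_sum_right[symmetric] sum_matrix_vector_mult[symmetric] sum)
  finally show ?thesis .
qed

lemma eq_spectral_sum_if_eigenvectors:
  fixes \<sigma> Y :: "complex^'n^'n" and M :: "'w \<Rightarrow> complex^'n^'n" and f :: "complex \<Rightarrow> real"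
  assumes sum: "(\<Sum>w\<in>\<Omega>. M w) = mat 1"
    and eigen: "\<And>w x. w \<in> \<Omega> \<Longrightarrow> \<sigma> *v (M w *v x) = c w *s (M w *v x)"
    and Y: "\<And>v \<mu>. \<sigma> *v v = \<mu> *s v \<Longrightarrow> Y *v v = of_real (f \<mu>) *s v"
  shows "Y = (\<Sum>w\<in>\<Omega>. f (c w) *\<^sub>R M w)"
  unfolding matrix_eq
proof
  fix x
  have "Y *v x = (\<Sum>w\<in>\<Omega>. Y *v (M w *v x))"
    by (simp add: sum sum_matrix_vector_mult[symmetric] vec.sum[symmetric])
  also have "\<dots> = (\<Sum>w\<in>\<Omega>. f (c w) *\<^sub>R (M w *v x))"
  proof (rule sum.cong)
    fix w
    assume "w \<in> \<Omega>"
    then have "Y *v (M w *v x) = of_real (f (c w)) *s (M w *v x)"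
      by (intro Y eigen)
    then show "Y *v (M w *v x) = f (c w) *\<^sub>R (M w *v x)"
      by (simp only: scaleR_eq_vector_smult_of_real)
  qed simp
  also have "\<dots> = (\<Sum>w\<in>\<Omega>. f (c w) *\<^sub>R M w) *v x"
    by (simp add: sum_matrix_vector_mult scaleR_matrix_vector_mult)
  finally show "Y *v x = (\<Sum>w\<in>\<Omega>. f (c w) *\<^sub>R M w) *v x" .
qed

lemma mpow_eq_spectral_sum:
  fixes \<sigma> :: "complex^'n^'n" and M :: "'w \<Rightarrow> complex^'n^'n"
  assumes "(\<Sum>w\<in>\<Omega>. M w) = mat 1"
    and "\<And>w. w \<in> \<Omega> \<Longrightarrow> \<sigma> ** M w = M w ** \<sigma>"
    and "\<And>w x. w \<in> \<Omega> \<Longrightarrow> \<sigma> *v (M w *v x) = c w *s (M w *v x)"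
  shows "mpow \<sigma> t = (\<Sum>w\<in>\<Omega>. Re (c w) powr t *\<^sub>R M w)"
  unfolding mpow_def
proof (rule the_equality)
  show "\<forall>v \<mu>. \<sigma> *v v = \<mu> *s v \<longrightarrow>
      (\<Sum>w\<in>\<Omega>. Re (c w) powr t *\<^sub>R M w) *v v = complex_of_real (Re \<mu> powr t) *s v"
  proof (intro allI impI)
    fix v \<mu>
    assume "\<sigma> *v v = \<mu> *s v"
    from spectral_sum_eigenvector[OF assms this, where f = "\<lambda>z. Re z powr t"]
    show "(\<Sum>w\<in>\<Omega>. Re (c w) powr t *\<^sub>R M w) *v v = complex_of_real (Re \<mu> powr t) *s v"
      by simp
  qed
  fix Y
  assume Y: "\<forall>v \<mu>. \<sigma> *v v = \<mu> *s v \<longrightarrow> Y *v v = complex_of_real (Re \<mu> powr t) *s v"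
  show "Y = (\<Sum>w\<in>\<Omega>. Re (c w) powr t *\<^sub>R M w)"
  proof (rule eq_spectral_sum_if_eigenvectors[where f = "\<lambda>z. Re z powr t"])
    show "(\<Sum>w\<in>\<Omega>. M w) = mat 1"
      by (fact assms(1))
    show "\<sigma> *v (M w *v x) = c w *s (M w *v x)" if "w \<in> \<Omega>" for w x
      using that by (rule assms(3))
    show "Y *v v = complex_of_real (Re \<mu> powr t) *s v" if "\<sigma> *v v = \<mu> *s v" for v \<mu>
      using Y[rule_format, OF that] .
  qed
qed

lemma dim_range_le_pvm_width:
  "finite \<Omega> \<Longrightarrow> \<omega> \<in> \<Omega> \<Longrightarrow> vec.dim (range ((*v) (M \<omega>))) \<le> pvm_width \<Omega> M"
  unfolding pvm_width_def by (rule cSup_upper) auto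

lemma markov_inequality_powr:
  fixes p q :: "'w \<Rightarrow> real"
  assumes "finite \<Omega>" and "\<And>w. w \<in> \<Omega> \<Longrightarrow> 0 \<le> q w" and "0 \<le> t"
  shows "exp (a * t) * (\<Sum>w\<in>{w\<in>\<Omega>. ereal a \<le> log_ext (p w)}. q w)
    \<le> (\<Sum>w\<in>\<Omega>. p w powr t * q w)"
proof -
  let ?A = "{w\<in>\<Omega>. ereal a \<le> log_ext (p w)}"
  have "exp (a * t) \<le> p w powr t" if "w \<in> ?A" for w
  proof -
    from that have "0 < p w" and "a \<le> ln (p w)"
      by (auto simp: log_ext_def split: if_splits)
    have "a * t \<le> ln (p w) * t"
      using \<open>a \<le> ln (p w)\<close> \<open>0 \<le> t\<close> by (rule mult_right_mono)
    with \<open>0 < p w\<close> show ?thesis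
      by (simp add: powr_def mult.commute)
  qed
  then have "exp (a * t) * (\<Sum>w\<in>?A. q w) \<le> (\<Sum>w\<in>?A. p w powr t * q w)"
    unfolding sum_distrib_left using assms(2) by (intro sum_mono mult_right_mono) auto
  also have "\<dots> \<le> (\<Sum>w\<in>\<Omega>. p w powr t * q w)"
    using assms(1,2) by (intro sum_mono2) auto
  finally show ?thesis .
qed

lemma exp_ext_mono: "x \<le> y \<Longrightarrow> exp_ext x \<le> exp_ext y"
  by (cases x; cases y) (auto simp: exp_ext_def)

lemma exp_ext_nonneg: "0 \<le> exp_ext x"
  by (cases x) (auto simp: exp_ext_def)

lemma le_exp_ext_neg_SUP:
  assumes "\<And>t. 0 \<le> t \<Longrightarrow> exp (a * t) * S \<le> T t"
  shows "ereal S \<le> exp_ext (- (SUP t\<in>{0..}. ereal (a * t) - log_ext (T t)))"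
proof (cases "0 < S")
  case False
  then have "ereal S \<le> 0"
    by simp
  then show ?thesis
    using exp_ext_nonneg by (rule order_trans)
next
  case True
  have "ereal (a * t) - log_ext (T t) \<le> - ereal (ln S)" if "0 \<le> t" for t
  proof -
    have "0 < exp (a * t) * S"
      using True by simp
    with assms[OF that] have "0 < T t"
      by linarith
    have "a * t + ln S = ln (exp (a * t) * S)"
      using True by (simp add: ln_mult)
    also have "\<dots> \<le> ln (T t)"
      using assms[OF that] \<open>0 < exp (a * t) * S\<close> by simp
    finally have "a * t + ln S \<le> ln (T t)" .
    with \<open>0 < T t\<close> show ?thesis
      by (simp add: log_ext_def)
  qed
  then have "(SUP t\<in>{0..}. ereal (a * t) - log_ext (T t)) \<le> - ereal (ln S)"
    by (intro SUP_least) simp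
  then have "- (- ereal (ln S)) \<le> - (SUP t\<in>{0..}. ereal (a * t) - log_ext (T t))"
    by (simp only: ereal_minus_le_minus)
  then have "ereal (ln S) \<le> - (SUP t\<in>{0..}. ereal (a * t) - log_ext (T t))"
    by (simp only: ereal_uminus_uminus)
  then have "exp_ext (ereal (ln S)) \<le> exp_ext (- (SUP t\<in>{0..}. ereal (a * t) - log_ext (T t)))"
    by (rule exp_ext_mono)
  then show ?thesis
    using True by (simp add: exp_ext_def)
qed

theorem lemma12:
  fixes \<Omega> :: "'w set" and M :: "'w \<Rightarrow> complex^'n^'n"
    and \<sigma> \<rho> :: "complex^'n^'n" and a :: real
  assumes "is_PVM \<Omega> M"
    and "pvm_width \<Omega> M = 1"
    and "density_op \<sigma>"
    and "pvm_commutes \<Omega> M \<sigma>"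
    and "density_op \<rho>"
  shows "ereal (\<Sum>\<omega>\<in>{\<omega>\<in>\<Omega>. log_ext (outcome_prob \<sigma> M \<omega>) \<ge> ereal a}. outcome_prob \<rho> M \<omega>)
         \<le> exp_ext (- (SUP t\<in>{0::real..}. ereal (a * t) - log_ext (Re (trace (\<rho> ** mpow \<sigma> t)))))"
proof (rule le_exp_ext_neg_SUP)
  have fin: "finite \<Omega>" and proj: "\<And>w. w \<in> \<Omega> \<Longrightarrow> orth_proj (M w)"
    and sum: "(\<Sum>w\<in>\<Omega>. M w) = mat 1"
    using assms(1) unfolding is_PVM_def by auto
  have comm: "\<And>w. w \<in> \<Omega> \<Longrightarrow> \<sigma> ** M w = M w ** \<sigma>"
    using assms(4) unfolding pvm_commutes_def by blast
  have eigen: "\<sigma> *v (M w *v x) = trace (\<sigma> ** M w) *s (M w *v x)" if "w \<in> \<Omega>" for w x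
    using proj[OF that] dim_range_le_pvm_width[OF fin that, of M] assms(2) comm[OF that]
    by (intro commuting_idempotent_rank_le_1_eigen) (auto simp: orth_proj_def)
  have "Re (trace (\<rho> ** mpow \<sigma> t))
      = (\<Sum>w\<in>\<Omega>. outcome_prob \<sigma> M w powr t * outcome_prob \<rho> M w)" for t
    by (simp add: mpow_eq_spectral_sum[OF sum comm eigen] trace_mult_sum_scaleR Re_sum outcome_prob_def)
  moreover have "0 \<le> outcome_prob \<rho> M w" if "w \<in> \<Omega>" for w
    using assms(5) proj[OF that] unfolding outcome_prob_def density_op_def
    by (auto intro: trace_mult_orth_proj_nonneg)
  ultimately show "exp (a * t) * (\<Sum>\<omega>\<in>{\<omega>\<in>\<Omega>. log_ext (outcome_prob \<sigma> M \<omega>) \<ge> ereal a}. outcome_prob \<rho> M \<omega>)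
      \<le> Re (trace (\<rho> ** mpow \<sigma> t))" if "0 \<le> t" for t
    using markov_inequality_powr[OF fin _ that] by simp
qed

end
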